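(* Let $Q=\{q_1,\ldots,q_n\}\subset\mathbb{P}^1$ be distinct points, $\vec g=(g_1,\ldots,g_n)$ effective divisors on $[0,1)$ of common degree $r$, and for each $i$ fix a good arrangement $a_{i,1},\ldots,a_{i,r}$ of $g_i$. Let $k_1,\ldots,k_r\in\mathbb{Z}$, $E^j=[k_j;a_{1,j},\ldots,a_{n,j}]$, $\tau_j=\#\{i: a_{i,j}\ge a_{i,j+1}\}$ and $z_j=k_{j+1}-(\tau_j+k_j+2-n)$, all indices modulo $r$. Then there exist nonzero zero-residue maps $\theta^j:E^j\to E^{j+1}\otimes\Omega^1(\log Q)$ for all $j=1,\ldots,r$ if and only if $z_j\geq0$ for all $j$; in this case $z_j$ is the number of zeros of $\theta^j$ beyond those required by the zero-residue condition. Moreover $z_1+\cdots+z_r=\delta(\vec g)$, so a choice of the $k_j$ with all $z_j\ge 0$ exists if and only if $\delta(\vec g)\geq 0$.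
   Context: $[k;a_1,\ldots,a_n]$ ($k\in\mathbb{Z}$, $a_i\in[0,1)$) is the parabolic line bundle with underlying bundle $\mathcal{O}(k)$ and weight $a_i$ at $q_i$. A zero-residue map $[k;a]\to[k';a']\otimes\Omega^1(\log Q)$ is a holomorphic map $\mathcal{O}(k)\to\mathcal{O}(k'+n-2)$ (using $\Omega^1(\log Q)\cong\mathcal{O}(n-2)$) vanishing at every $q_i$ with $a_i\geq a'_i$ (these are the required zeros). An arrangement of $g_i=\sum m_i(\alpha)[\alpha]$ is a sequence $a_{i,1},\ldots,a_{i,r}$ in $[0,1)$ containing each $\alpha$ exactly $m_i(\alpha)$ times; it is good if $\#\{t: a_{i,t}\ge a_{i,t+1}\}$ (indices mod $r$) is minimal among arrangements. The defect is $\delta(\vec g)=(n-2)r-\sum_i\max_\alpha m_i(\alpha)$. *)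

theory Defs
  imports "HOL-Computational_Algebra.Polynomial" "HOL-Library.Multiset" Complex_Main
begin

text \<open>Points of the projective line: Some z is the affine point z, None is infinity.
  A section of O(d) on P^1 (equivalently a holomorphic map O(a) to O(b) with d = b - a) is
  represented by its dehomogenisation: a complex polynomial of degree at most d
  (only the zero section if d < 0).\<close>

type_synonym P1 = "complex option"

definition section_O :: "int \<Rightarrow> complex poly \<Rightarrow> bool" where
  "section_O d p \<longleftrightarrow> (p = 0 \<or> int (degree p) \<le> d)"

definition vanishes_at :: "int \<Rightarrow> complex poly \<Rightarrow> P1 \<Rightarrow> bool" where
  "vanishes_at d p q = (case q of Some z \<Rightarrow> poly p z = 0
                                | None \<Rightarrow> (p = 0 \<or> int (degree p) < d))"

text \<open>Number of zeros (with multiplicity, on all of P^1) of a nonzero section p of O(d):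
  affine zeros counted with their order, plus the order d - deg p at infinity.\<close>
definition num_zeros :: "int \<Rightarrow> complex poly \<Rightarrow> int" where
  "num_zeros d p = int (\<Sum>z\<in>{z. poly p z = 0}. order z p) + (d - int (degree p))"

text \<open>Parabolic line bundle [k; a_1,...,a_n]: degree k, weight function (index i < n, 0-based).\<close>
type_synonym plb = "int \<times> (nat \<Rightarrow> real)"

definition hom_degree :: "P1 list \<Rightarrow> plb \<Rightarrow> plb \<Rightarrow> int" where
  "hom_degree Q E F = fst F + (int (length Q) - 2) - fst E"

definition required_zeros :: "P1 list \<Rightarrow> plb \<Rightarrow> plb \<Rightarrow> nat set" where
  "required_zeros Q E F = {i. i < length Q \<and> snd E i \<ge> snd F i}"

text \<open>Zero-residue map E \<rightarrow> F \<otimes> Omega^1(log Q), Omega^1(log Q) = O(n-2).\<close>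
definition zero_residue_map :: "P1 list \<Rightarrow> plb \<Rightarrow> plb \<Rightarrow> complex poly \<Rightarrow> bool" where
  "zero_residue_map Q E F \<theta> \<longleftrightarrow>
     section_O (hom_degree Q E F) \<theta> \<and>
     (\<forall>i\<in>required_zeros Q E F. vanishes_at (hom_degree Q E F) \<theta> (Q ! i))"

definition extra_zeros :: "P1 list \<Rightarrow> plb \<Rightarrow> plb \<Rightarrow> complex poly \<Rightarrow> int" where
  "extra_zeros Q E F \<theta> = num_zeros (hom_degree Q E F) \<theta> - int (card (required_zeros Q E F))"

definition cyc_desc :: "real list \<Rightarrow> nat" where
  "cyc_desc xs = card {t. t < length xs \<and> xs ! t \<ge> xs ! ((t + 1) mod length xs)}"

definition is_arrangement :: "real multiset \<Rightarrow> real list \<Rightarrow> bool" where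
  "is_arrangement g xs \<longleftrightarrow> mset xs = g"

definition good_arrangement :: "real multiset \<Rightarrow> real list \<Rightarrow> bool" where
  "good_arrangement g xs \<longleftrightarrow> is_arrangement g xs \<and>
     (\<forall>ys. is_arrangement g ys \<longrightarrow> cyc_desc xs \<le> cyc_desc ys)"

definition max_mult :: "real multiset \<Rightarrow> nat" where
  "max_mult g = Max (insert 0 (count g ` set_mset g))"

definition defect :: "real multiset list \<Rightarrow> nat \<Rightarrow> int" where
  "defect gs r = (int (length gs) - 2) * int r - (\<Sum>i<length gs. int (max_mult (gs ! i)))"

end

theory Submission
  imports Defs "HOL-Computational_Algebra.Fundamental_Theorem_Algebra"
begin

text \<open>A nonzero section of \<open>O(d)\<close> on the projective line has exactly \<open>d\<close> zeros, and one vanishing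
  at a given set of points exists iff there are at most \<open>d\<close> of them. Hence a nonzero zero-residue
  map \<open>E\<^sup>j \<rightarrow> E\<^sup>j\<^sup>+\<^sup>1 \<otimes> \<Omega>\<^sup>1(log Q)\<close> exists iff its degree \<open>k\<^sub>j\<^sub>+\<^sub>1 - k\<^sub>j + n - 2\<close> is at least the
  number \<open>\<tau>\<^sub>j\<close> of required zeros, and \<open>z\<^sub>j\<close> is the surplus. Summing over \<open>j\<close>, the \<open>k\<^sub>j\<close> telescope
  and \<open>\<Sum>\<^sub>j \<tau>\<^sub>j\<close> is the total number of cyclic descents of the arrangements. For a good arrangement
  of \<open>g\<^sub>i\<close> this is the maximal multiplicity of \<open>g\<^sub>i\<close>: between two cyclically consecutive
  occurrences of a value there is a descent, and listing the layers of distinct values of \<open>g\<^sub>i\<close>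
  one after the other, each in increasing order, attains the bound. Finally, lower bounds
  \<open>c\<^sub>j\<close> on the increments \<open>k\<^sub>j\<^sub>+\<^sub>1 - k\<^sub>j\<close> can be met cyclically iff \<open>\<Sum>\<^sub>j c\<^sub>j \<le> 0\<close>.\<close>

lemma sum_order_roots_eq_degree:
  fixes p :: "complex poly"
  assumes "p \<noteq> 0"
  shows "(\<Sum>z | poly p z = 0. order z p) = degree p"
  using assms size_proots_complex[of p] by (simp add: size_multiset_overloaded_eq)

lemma num_zeros_eq:
  assumes "p \<noteq> 0"
  shows "num_zeros d p = d"
  using sum_order_roots_eq_degree[OF assms] by (simp add: num_zeros_def)

lemma card_P1_set:
  fixes P :: "P1 set"
  assumes "finite P"
  shows "card P = card (Some -` P) + (if None \<in> P then 1 else 0)"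
proof -
  have P_split: "P = Some ` (Some -` P) \<union> (if None \<in> P then {None} else {})"
    by (auto simp: image_iff) (metis not_Some_eq)
  have "finite (Some -` P)"
    using assms by (simp add: finite_vimageI)
  moreover have "card (Some ` (Some -` P)) = card (Some -` P)"
    by (rule card_image) simp
  ultimately show ?thesis
    using assms by (subst P_split, subst card_Un_disjoint) auto
qed

lemma ex_section_vanishing_iff:
  fixes P :: "P1 set"
  assumes "finite P"
  shows "(\<exists>\<theta>. \<theta> \<noteq> 0 \<and> section_O d \<theta> \<and> (\<forall>q\<in>P. vanishes_at d \<theta> q)) \<longleftrightarrow> int (card P) \<le> d"
proof
  assume "\<exists>\<theta>. \<theta> \<noteq> 0 \<and> section_O d \<theta> \<and> (\<forall>q\<in>P. vanishes_at d \<theta> q)"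
  then obtain \<theta> where \<theta>: "\<theta> \<noteq> 0" "section_O d \<theta>" "\<forall>q\<in>P. vanishes_at d \<theta> q"
    by blast
  have "Some -` P \<subseteq> {z. poly \<theta> z = 0}"
    using \<theta>(3) by (auto simp: vanishes_at_def)
  then have "card (Some -` P) \<le> card {z. poly \<theta> z = 0}"
    using poly_roots_finite[OF \<theta>(1)] by (rule card_mono[rotated])
  also have "\<dots> \<le> degree \<theta>"
    using card_poly_roots_bound[OF \<theta>(1)] .
  finally have roots: "card (Some -` P) \<le> degree \<theta>" .
  have "int (degree \<theta>) + (if None \<in> P then 1 else 0) \<le> d"
    using \<theta> by (auto simp: section_O_def vanishes_at_def)
  then show "int (card P) \<le> d"
    using roots card_P1_set[OF assms] by (cases "None \<in> P") simp_all
next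
  assume card_le: "int (card P) \<le> d"
  define \<theta> where "\<theta> = (\<Prod>z\<in>Some -` P. [:-z, 1:])"
  have fin: "finite (Some -` P)"
    using assms by (simp add: finite_vimageI)
  have "\<theta> \<noteq> 0"
    using fin by (simp add: \<theta>_def)
  moreover have deg: "degree \<theta> = card (Some -` P)"
    unfolding \<theta>_def by (subst degree_prod_eq_sum_degree) auto
  moreover have "vanishes_at d \<theta> q" if "q \<in> P" for q
  proof (cases q)
    case None
    then show ?thesis
      using that deg card_le card_P1_set[OF assms] by (simp add: vanishes_at_def)
  next
    case (Some z)
    then show ?thesis
      using that fin by (simp add: vanishes_at_def \<theta>_def poly_prod prod_zero_iff)
  qed
  ultimately show "\<exists>\<theta>. \<theta> \<noteq> 0 \<and> section_O d \<theta> \<and> (\<forall>q\<in>P. vanishes_at d \<theta> q)"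
    using card_le card_P1_set[OF assms] by (auto simp: section_O_def)
qed

lemma ex_zero_residue_map_iff:
  assumes "distinct Q"
  shows "(\<exists>\<theta>. \<theta> \<noteq> 0 \<and> zero_residue_map Q E F \<theta>)
           \<longleftrightarrow> int (card (required_zeros Q E F)) \<le> hom_degree Q E F"
proof -
  let ?R = "required_zeros Q E F"
  have "?R \<subseteq> {..<length Q}"
    by (auto simp: required_zeros_def)
  then have "card ((!) Q ` ?R) = card ?R"
    using assms by (intro card_image inj_on_subset[OF inj_on_nth[of Q "{..<length Q}"]]) auto
  moreover have "finite ((!) Q ` ?R)"
    by (simp add: required_zeros_def)
  ultimately show ?thesis
    using ex_section_vanishing_iff[of "(!) Q ` ?R" "hom_degree Q E F"]
    by (simp add: zero_residue_map_def)
qed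

lemma extra_zeros_eq:
  assumes "\<theta> \<noteq> 0"
  shows "extra_zeros Q E F \<theta> = hom_degree Q E F - int (card (required_zeros Q E F))"
  by (simp add: extra_zeros_def num_zeros_eq[OF assms])

lemma card_Collect_less_eq_sum:
  "card {i. i < (n::nat) \<and> P i} = (\<Sum>i<n. if P i then 1 else 0)"
  by (simp add: sum.If_cases Collect_conj_eq lessThan_def Int_commute)

lemma sum_card_Collect_less_swap:
  "(\<Sum>j<r. card {i. i < n \<and> P i j}) = (\<Sum>i<(n::nat). card {j. j < (r::nat) \<and> P i j})"
  by (simp add: card_Collect_less_eq_sum sum.swap[of _ "{..<n}"])

fun descents :: "'a::linorder list \<Rightarrow> nat" where
  "descents (x # y # zs) = (if y \<le> x then 1 else 0) + descents (y # zs)"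
| "descents _ = 0"

lemma descents_eq_sum: "descents xs = (\<Sum>t<length xs - 1. if xs ! Suc t \<le> xs ! t then 1 else 0)"
  by (induction xs rule: descents.induct) (simp_all del: sum.lessThan_Suc add: sum.lessThan_Suc_shift)

lemma cyc_desc_eq_descents:
  assumes "xs \<noteq> []"
  shows "cyc_desc xs = descents xs + (if hd xs \<le> last xs then 1 else 0)"
proof -
  obtain m where m: "length xs = Suc m"
    using assms by (cases xs) auto
  have "cyc_desc xs = (\<Sum>t<Suc m. if xs ! ((t + 1) mod Suc m) \<le> xs ! t then 1 else 0)"
    unfolding cyc_desc_def m card_Collect_less_eq_sum ..
  also have "\<dots> = (\<Sum>t<m. if xs ! Suc t \<le> xs ! t then 1 else 0) + (if xs ! 0 \<le> xs ! m then 1 else 0)"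
    by simp
  finally show ?thesis
    using assms m by (simp add: descents_eq_sum hd_conv_nth last_conv_nth)
qed

text \<open>Each occurrence of \<open>\<alpha>\<close> but the last is followed by a descent before the next one; the
  boundary terms absorb the first and last stretches.\<close>
lemma count_le_descents:
  "xs \<noteq> [] \<Longrightarrow> count (mset xs) \<alpha> + (if \<alpha> < hd xs then 1 else 0) + (if last xs < \<alpha> then 1 else 0)
     \<le> descents xs + 1"
  by (induction xs rule: descents.induct) (auto split: if_splits)

lemma count_le_cyc_desc: "count (mset xs) \<alpha> \<le> cyc_desc xs"
proof (cases "xs = []")
  case False
  then show ?thesis
    using count_le_descents[OF False, of \<alpha>] cyc_desc_eq_descents[OF False]
    by (auto split: if_splits)
qed simp

lemma descents_append: "descents (xs @ ys) \<le> descents xs + 1 + descents ys"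
proof (induction xs rule: descents.induct)
  case ("2_2" x)
  then show ?case by (cases ys) auto
qed auto

lemma descents_strict_sorted: "sorted_wrt (<) xs \<Longrightarrow> descents xs = 0"
  by (induction xs rule: descents.induct) auto

text \<open>Peel off the layer of distinct values, listed increasingly; the rest has all
  multiplicities one smaller.\<close>
lemma ex_arrangement_few_descents:
  fixes g :: "'a::linorder multiset"
  assumes "\<forall>v. count g v \<le> N" and "g \<noteq> {#}"
  shows "\<exists>xs. mset xs = g \<and> descents xs < N"
  using assms
proof (induction N arbitrary: g)
  case 0
  then show ?case
    by (metis le_zero_eq multiset_eqI count_empty)
next
  case (Suc N)
  define L where "L = sorted_list_of_set (set_mset g)"
  define g' where "g' = g - mset_set (set_mset g)"
  have "mset L = mset_set (set_mset g)"
    unfolding L_def by (metis mset_set_set distinct_sorted_list_of_set set_sorted_list_of_set finite_set_mset)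
  then have g_split: "g = mset L + g'"
    unfolding g'_def by (simp add: mset_set_set_mset_msubset subset_mset.add_diff_inverse)
  have L: "descents L = 0"
    unfolding L_def by (simp add: descents_strict_sorted)
  show ?case
  proof (cases "g' = {#}")
    case True
    then show ?thesis
      using g_split L by (intro exI[of _ L]) simp
  next
    case False
    have "count g' v \<le> N" for v
      using Suc.prems(1)[rule_format, of v]
      by (cases "v \<in># g") (simp_all add: g'_def count_mset_set not_in_iff)
    then obtain xs' where xs': "mset xs' = g'" "descents xs' < N"
      using Suc.IH False by blast
    have "descents (L @ xs') < Suc N"
      using descents_append[of L xs'] L xs'(2) by simp
    then show ?thesis
      using g_split xs'(1) by (intro exI[of _ "L @ xs'"]) simp
  qed
qed

lemma count_le_max_mult: "count g v \<le> max_mult g"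
  by (cases "v \<in># g") (auto simp: max_mult_def not_in_iff)

lemma max_mult_attained: "\<exists>\<alpha>. count g \<alpha> = max_mult g"
proof (cases "g = {#}")
  case True
  then show ?thesis
    by (simp add: max_mult_def)
next
  case False
  then have "max_mult g \<in> count g ` set_mset g"
    unfolding max_mult_def by (simp add: Max_insert Max_in)
  then show ?thesis
    by (metis imageE)
qed

lemma cyc_desc_good_arrangement:
  assumes "good_arrangement g xs"
  shows "cyc_desc xs = max_mult g"
proof (rule antisym)
  have g: "mset xs = g"
    using assms by (simp add: good_arrangement_def is_arrangement_def)
  show "cyc_desc xs \<le> max_mult g"
  proof (cases "g = {#}")
    case True
    then show ?thesis
      using g by (simp add: cyc_desc_def)
  next
    case False
    obtain ys where ys: "mset ys = g" "descents ys < max_mult g"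
      using ex_arrangement_few_descents[OF _ False] count_le_max_mult by blast
    then have "ys \<noteq> []"
      using False by auto
    then have "cyc_desc ys \<le> max_mult g"
      using cyc_desc_eq_descents ys(2) by fastforce
    moreover have "cyc_desc xs \<le> cyc_desc ys"
      using assms ys(1) by (simp add: good_arrangement_def is_arrangement_def)
    ultimately show ?thesis
      by simp
  qed
  show "max_mult g \<le> cyc_desc xs"
    using max_mult_attained[of g] count_le_cyc_desc[of xs] g by metis
qed

lemma sum_card_cyclic_descents:
  assumes "\<forall>i<n. good_arrangement (g ! i) (a ! i) \<and> size (g ! i) = r"
  shows "(\<Sum>j<r. card {i. i < n \<and> a ! i ! j \<ge> a ! i ! ((j + 1) mod r)}) = (\<Sum>i<n. max_mult (g ! i))"
proof -
  have card_eq: "card {j. j < r \<and> a ! i ! j \<ge> a ! i ! ((j + 1) mod r)} = max_mult (g ! i)"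
    if "i < n" for i
  proof -
    have good: "good_arrangement (g ! i) (a ! i)" and "size (g ! i) = r"
      using assms that by auto
    then have "length (a ! i) = r"
      by (metis good_arrangement_def is_arrangement_def size_mset)
    with cyc_desc_good_arrangement[OF good] show ?thesis
      by (simp add: cyc_desc_def)
  qed
  have "(\<Sum>j<r. card {i. i < n \<and> a ! i ! j \<ge> a ! i ! ((j + 1) mod r)})
      = (\<Sum>i<n. card {j. j < r \<and> a ! i ! j \<ge> a ! i ! ((j + 1) mod r)})"
    by (rule sum_card_Collect_less_swap)
  also have "\<dots> = (\<Sum>i<n. max_mult (g ! i))"
    using card_eq by (intro sum.cong) simp_all
  finally show ?thesis .
qed

lemma sum_mod_shift:
  fixes f :: "nat \<Rightarrow> 'a::comm_monoid_add"
  assumes "0 < r"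
  shows "(\<Sum>j<r. f ((j + 1) mod r)) = (\<Sum>j<r. f j)"
proof -
  obtain m where r: "r = Suc m"
    using assms gr0_conv_Suc by blast
  have "(\<Sum>j<Suc m. f ((j + 1) mod Suc m)) = (\<Sum>j<m. f (Suc j)) + f 0"
    by simp
  also have "\<dots> = (\<Sum>j<Suc m. f j)"
    by (subst sum.lessThan_Suc_shift) (simp add: add.commute)
  finally show ?thesis
    using r by simp
qed

lemma sum_cyclic_differences:
  fixes f :: "nat \<Rightarrow> 'a::ab_group_add"
  assumes "0 < r"
  shows "(\<Sum>j<r. f ((j + 1) mod r) - f j) = 0"
  unfolding sum_subtractf sum_mod_shift[OF assms] by simp

text \<open>The witness is the sequence of partial sums of \<open>c\<close>; only the wrap-around step can fail.\<close>
lemma ex_cyclic_potential_iff: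
  fixes c :: "nat \<Rightarrow> int"
  assumes "0 < r"
  shows "(\<exists>k. \<forall>j<r. c j \<le> k ((j + 1) mod r) - k j) \<longleftrightarrow> (\<Sum>j<r. c j) \<le> 0"
proof
  assume "\<exists>k. \<forall>j<r. c j \<le> k ((j + 1) mod r) - k j"
  then obtain k where "\<forall>j<r. c j \<le> k ((j + 1) mod r) - k j"
    by blast
  then have "(\<Sum>j<r. c j) \<le> (\<Sum>j<r. k ((j + 1) mod r) - k j)"
    by (intro sum_mono) simp
  then show "(\<Sum>j<r. c j) \<le> 0"
    using sum_cyclic_differences[OF assms, of k] by simp
next
  assume sum_le: "(\<Sum>j<r. c j) \<le> 0"
  obtain m where r: "r = Suc m"
    using assms gr0_conv_Suc by blast
  define k where "k j = (\<Sum>t<j. c t)" for j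
  have "c j \<le> k ((j + 1) mod r) - k j" if "j < r" for j
  proof (cases "j < m")
    case True
    then show ?thesis
      by (simp add: r k_def)
  next
    case False
    then have "j = m"
      using that r by simp
    then show ?thesis
      using sum_le by (simp add: r k_def)
  qed
  then show "\<exists>k. \<forall>j<r. c j \<le> k ((j + 1) mod r) - k j"
    by blast
qed

theorem lemma6p7:
  fixes Q :: "P1 list" and g :: "real multiset list" and a :: "real list list"
    and r :: nat and k :: "nat \<Rightarrow> int"
  assumes Qdist: "distinct Q"
    and glen: "length g = length Q"
    and rpos: "0 < r"
    and gdiv: "\<forall>i<length Q. set_mset (g ! i) \<subseteq> {0..<1} \<and> size (g ! i) = r"
    and alen: "length a = length Q"
    and agood: "\<forall>i<length Q. good_arrangement (g ! i) (a ! i)"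
  defines "E \<equiv> \<lambda>(kk :: nat \<Rightarrow> int) j. (kk j, \<lambda>i. a ! i ! j)"
    and "z \<equiv> \<lambda>(kk :: nat \<Rightarrow> int) j.
               kk ((j + 1) mod r) - (int (card {i. i < length Q \<and> a ! i ! j \<ge> a ! i ! ((j + 1) mod r)}) + kk j + 2 - int (length Q))"
  shows "((\<forall>j<r. \<exists>\<theta>. \<theta> \<noteq> 0 \<and> zero_residue_map Q (E k j) (E k ((j + 1) mod r)) \<theta>)
            \<longleftrightarrow> (\<forall>j<r. z k j \<ge> 0))
       \<and> (\<forall>j<r. \<forall>\<theta>. \<theta> \<noteq> 0 \<and> zero_residue_map Q (E k j) (E k ((j + 1) mod r)) \<theta>
              \<longrightarrow> extra_zeros Q (E k j) (E k ((j + 1) mod r)) \<theta> = z k j)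
       \<and> (\<Sum>j<r. z k j) = defect g r
       \<and> ((\<exists>kk. \<forall>j<r. z kk j \<ge> 0) \<longleftrightarrow> defect g r \<ge> 0)"
proof -
  define n where "n = length Q"
  define \<tau> where "\<tau> j = card {i. i < n \<and> a ! i ! j \<ge> a ! i ! ((j + 1) mod r)}" for j
  define c where "c j = int (\<tau> j) - (int n - 2)" for j
  have z_eq: "z kk j = kk ((j + 1) mod r) - kk j - c j" for kk j
    by (simp add: z_def c_def \<tau>_def n_def)
  have z_hom_degree: "z k j = hom_degree Q (E k j) (E k ((j + 1) mod r))
                            - int (card (required_zeros Q (E k j) (E k ((j + 1) mod r))))" for j
    by (simp add: z_def E_def hom_degree_def required_zeros_def)
  have "(\<Sum>j<r. \<tau> j) = (\<Sum>i<n. max_mult (g ! i))"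
    unfolding \<tau>_def using agood gdiv by (intro sum_card_cyclic_descents) (simp add: n_def)
  then have sum_c: "(\<Sum>j<r. c j) = - defect g r"
    by (simp add: c_def sum_subtractf defect_def glen n_def flip: of_nat_sum)
  then have sum_z: "(\<Sum>j<r. z kk j) = defect g r" for kk
    using sum_cyclic_differences[OF rpos, of kk] by (simp add: z_eq sum_subtractf)
  have "(\<forall>j<r. \<exists>\<theta>. \<theta> \<noteq> 0 \<and> zero_residue_map Q (E k j) (E k ((j + 1) mod r)) \<theta>)
          \<longleftrightarrow> (\<forall>j<r. z k j \<ge> 0)"
    using ex_zero_residue_map_iff[OF Qdist] z_hom_degree by simp
  moreover have "(\<exists>kk. \<forall>j<r. z kk j \<ge> 0) \<longleftrightarrow> defect g r \<ge> 0"
    using ex_cyclic_potential_iff[OF rpos, of c] sum_c by (simp add: z_eq)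
  moreover have "\<forall>j<r. \<forall>\<theta>. \<theta> \<noteq> 0 \<and> zero_residue_map Q (E k j) (E k ((j + 1) mod r)) \<theta>
      \<longrightarrow> extra_zeros Q (E k j) (E k ((j + 1) mod r)) \<theta> = z k j"
    using extra_zeros_eq z_hom_degree by simp
  ultimately show ?thesis
    using sum_z by blast
qed

end
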